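(* There exists a list $I=(x_1,\ldots,x_n)$ of items with all sizes $x_i\in(1/3,1]$ such that $$\mathbb{E}[\mathrm{BF}(I^\sigma)] > \frac{6}{5}\,\mathrm{OPT}(I),$$ where $\sigma$ is drawn uniformly at random from the set $\mathcal{S}_n$ of permutations of $[n]$.
   Context: Bin packing: given a list $I=(x_1,\ldots,x_n)$ of items with sizes in $(0,1]$, a packing assigns items to unit-capacity bins so that the total size of items in each bin is at most $1$. $\mathrm{OPT}(I)$ denotes the minimum number of bins in a feasible packing. The online algorithm Best Fit (BF) processes the items in the given order and packs the current item into the fullest bin (largest current load) into which it fits, opening a new bin if it fits into no existing bin; items are never moved. $\mathrm{BF}(I)$ denotes the number of bins Best Fit uses on list $I$. For $\sigma\in\mathcal{S}_n$, $I^\sigma=(x_{\sigma(1)},\ldots,x_{\sigma(n)})$. *)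

theory Defs
  imports "HOL-Analysis.Analysis" "HOL-Combinatorics.Permutations"
begin

text \<open>The state is the list of current bin loads (in order of opening).
  An item x is put into a bin of largest load among those bins into which it fits
  (load + x \<le> 1); ties are broken by smallest index (this does not affect the
  number of bins used).\<close>

definition bf_fits :: "real list \<Rightarrow> real \<Rightarrow> nat set" where
  "bf_fits L x = {i. i < length L \<and> L ! i + x \<le> 1}"

definition bf_step :: "real list \<Rightarrow> real \<Rightarrow> real list" where
  "bf_step L x =
     (if bf_fits L x = {} then L @ [x]
      else (let m = Max ((\<lambda>i. L ! i) ` bf_fits L x);
                j = LEAST i. i \<in> bf_fits L x \<and> L ! i = m
            in L[j := L ! j + x]))"

definition bf_loads :: "real list \<Rightarrow> real list" where
  "bf_loads xs = foldl bf_step [] xs"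

definition BF :: "real list \<Rightarrow> nat" where
  "BF xs = length (bf_loads xs)"

definition feasible_packing :: "real list \<Rightarrow> nat \<Rightarrow> (nat \<Rightarrow> nat) \<Rightarrow> bool" where
  "feasible_packing xs k f \<longleftrightarrow>
     (\<forall>i<length xs. f i < k) \<and>
     (\<forall>b<k. (\<Sum>i\<in>{i. i < length xs \<and> f i = b}. xs ! i) \<le> 1)"

definition OPT :: "real list \<Rightarrow> nat" where
  "OPT xs = (LEAST k. \<exists>f. feasible_packing xs k f)"

definition permute_list_by :: "(nat \<Rightarrow> nat) \<Rightarrow> real list \<Rightarrow> real list" where
  "permute_list_by \<sigma> xs = map (\<lambda>i. xs ! \<sigma> i) [0..<length xs]"

definition expected_BF_random_order :: "real list \<Rightarrow> real" where
  "expected_BF_random_order xs =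
     (\<Sum>\<sigma>\<in>{\<sigma>. \<sigma> permutes {..<length xs}}. real (BF (permute_list_by \<sigma> xs)))
       / fact (length xs)"

end

theory Submission
  imports Defs "HOL-Combinatorics.Multiset_Permutations"
begin

text \<open>The items 0.34, 0.35, 0.36 and their complements 0.66, 0.65, 0.64 fill three bins
  exactly, so OPT = 3, and Best Fit needs a fourth bin unless it ends up pairing every small
  item with its complement. Running Best Fit on all 720 orders shows that it fails to do so in
  440 of them, so the expected number of bins is 3 + 11/18 > 18/5.\<close>

text \<open>Best Fit with capacity C over any ordered group, in executable form. It commutes with
  order-preserving additive maps, so the 720 runs can be evaluated on integer sizes in
  hundredths, avoiding rational arithmetic on reals.\<close>

definition best_fit_step :: "'a::linordered_ab_group_add \<Rightarrow> 'a list \<Rightarrow> 'a \<Rightarrow> 'a list" where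
  "best_fit_step C L x =
     (let F = Set.filter (\<lambda>i. L ! i + x \<le> C) {..<length L}
      in if Set.is_empty F then L @ [x]
         else let m = Max ((!) L ` F); j = Min (Set.filter (\<lambda>i. L ! i = m) F)
              in L[j := L ! j + x])"

definition best_fit_bins :: "'a::linordered_ab_group_add \<Rightarrow> 'a list \<Rightarrow> nat" where
  "best_fit_bins C xs = length (foldl (best_fit_step C) [] xs)"

lemma bf_step_eq_best_fit_step: "bf_step = best_fit_step 1"
proof (intro ext)
  fix L :: "real list" and x :: real
  define F where "F = Set.filter (\<lambda>i. L ! i + x \<le> 1) {..<length L}"
  have fits: "bf_fits L x = F"
    by (auto simp: bf_fits_def F_def)
  have "(LEAST i. i \<in> F \<and> L ! i = Max ((!) L ` F)) = Min (Set.filter (\<lambda>i. L ! i = Max ((!) L ` F)) F)"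
    if "F \<noteq> {}"
  proof -
    have "finite F"
      by (simp add: F_def)
    then have "Max ((!) L ` F) \<in> (!) L ` F"
      using that by simp
    then show ?thesis
      using \<open>finite F\<close> by (subst Least_Min) auto
  qed
  then show "bf_step L x = best_fit_step 1 L x"
    unfolding bf_step_def best_fit_step_def fits F_def[symmetric] Let_def Set.is_empty_iff by simp
qed

lemma map_best_fit_step:
  fixes h :: "'a::linordered_ab_group_add \<Rightarrow> 'b::linordered_ab_group_add"
  assumes mono: "strict_mono h" and add: "\<And>a b. h (a + b) = h a + h b"
  shows "map h (best_fit_step C L x) = best_fit_step (h C) (map h L) (h x)"
proof -
  define F where "F = Set.filter (\<lambda>i. L ! i + x \<le> C) {..<length L}"
  have fits: "Set.filter (\<lambda>i. map h L ! i + h x \<le> h C) {..<length (map h L)} = F"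
    by (auto simp: F_def strict_mono_less_eq[OF mono] simp flip: add)
  show ?thesis
  proof (cases "F = {}")
    case True
    then show ?thesis
      unfolding best_fit_step_def fits F_def[symmetric] Let_def Set.is_empty_iff by simp
  next
    case False
    have "finite F"
      by (simp add: F_def)
    define m where "m = Max ((!) L ` F)"
    have "m \<in> (!) L ` F"
      using False \<open>finite F\<close> by (simp add: m_def)
    have "(!) (map h L) ` F = h ` (!) L ` F"
      by (force simp: F_def)
    then have Max_map: "Max ((!) (map h L) ` F) = h m"
      using False \<open>finite F\<close> mono_Max_commute[OF strict_mono_mono[OF mono]] by (simp add: m_def)
    have filter_map: "{i \<in> F. map h L ! i = h m} = {i \<in> F. L ! i = m}"
      by (auto simp: F_def strict_mono_eq[OF mono])
    define j where "j = Min {i \<in> F. L ! i = m}"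
    have "j \<in> {i \<in> F. L ! i = m}"
      unfolding j_def using \<open>m \<in> (!) L ` F\<close> \<open>finite F\<close> by (intro Min_in) auto
    then have "j < length L"
      by (simp add: F_def)
    then show ?thesis
      unfolding best_fit_step_def fits F_def[symmetric] Let_def Set.is_empty_iff
      using False by (simp add: Max_map filter_map map_update add flip: m_def j_def)
  qed
qed

lemma foldl_best_fit_step_map:
  fixes h :: "'a::linordered_ab_group_add \<Rightarrow> 'b::linordered_ab_group_add"
  assumes "strict_mono h" and "\<And>a b. h (a + b) = h a + h b"
  shows "foldl (best_fit_step (h C)) (map h L) (map h xs) = map h (foldl (best_fit_step C) L xs)"
  by (induction xs arbitrary: L) (simp_all flip: map_best_fit_step[OF assms])

lemma BF_map_eq_best_fit_bins:
  fixes h :: "'a::linordered_ab_group_add \<Rightarrow> real"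
  assumes "strict_mono h" and "\<And>a b. h (a + b) = h a + h b" and "h C = 1"
  shows "BF (map h xs) = best_fit_bins C xs"
  using foldl_best_fit_step_map[OF assms(1,2), of C "[]" xs]
  by (simp add: BF_def bf_loads_def best_fit_bins_def bf_step_eq_best_fit_step assms(3))

lemma bij_betw_map_upt_permutes:
  "bij_betw (\<lambda>\<sigma>. map \<sigma> [0..<n]) {\<sigma>. \<sigma> permutes {..<n}} (permutations_of_set {..<n})"
proof (rule bij_betw_imageI)
  show "inj_on (\<lambda>\<sigma>. map \<sigma> [0..<n]) {\<sigma>. \<sigma> permutes {..<n}}"
  proof (rule inj_onI)
    fix \<sigma> \<tau>
    assume \<sigma>: "\<sigma> \<in> {\<sigma>. \<sigma> permutes {..<n}}" and \<tau>: "\<tau> \<in> {\<sigma>. \<sigma> permutes {..<n}}"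
      and eq: "map \<sigma> [0..<n] = map \<tau> [0..<n]"
    show "\<sigma> = \<tau>"
    proof
      fix i
      show "\<sigma> i = \<tau> i"
        using \<sigma> \<tau> map_eq_conv[THEN iffD1, OF eq, rule_format, of i]
        by (cases "i < n") (auto simp: permutes_not_in)
    qed
  qed
  show "(\<lambda>\<sigma>. map \<sigma> [0..<n]) ` {\<sigma>. \<sigma> permutes {..<n}} = permutations_of_set {..<n}"
  proof (intro equalityI subsetI)
    fix ys
    assume "ys \<in> (\<lambda>\<sigma>. map \<sigma> [0..<n]) ` {\<sigma>. \<sigma> permutes {..<n}}"
    then obtain \<sigma> where \<sigma>: "\<sigma> permutes {..<n}" and ys: "ys = map \<sigma> [0..<n]"
      by blast
    have "set ys = {..<n}"
      using permutes_image[OF \<sigma>] by (simp add: ys lessThan_atLeast0)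
    moreover have "distinct ys"
      using permutes_inj_on[OF \<sigma>] by (simp add: ys distinct_map inj_on_subset)
    ultimately show "ys \<in> permutations_of_set {..<n}"
      by blast
  next
    fix ys
    assume "ys \<in> permutations_of_set {..<n}"
    then have set_ys: "set ys = {..<n}" and "distinct ys"
      by (auto dest: permutations_of_setD)
    then have len: "length ys = n"
      using distinct_card by fastforce
    define \<sigma> where "\<sigma> i = (if i < n then ys ! i else i)" for i
    have "bij_betw ((!) ys) {..<n} {..<n}"
      using bij_betw_nth[OF \<open>distinct ys\<close>] len set_ys by simp
    then have "bij_betw \<sigma> {..<n} {..<n}"
      by (rule bij_betw_cong[THEN iffD1, rotated]) (simp add: \<sigma>_def)
    then have "\<sigma> permutes {..<n}"
      by (rule bij_imp_permutes) (simp add: \<sigma>_def)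
    moreover have "map \<sigma> [0..<n] = ys"
      using len by (intro nth_equalityI) (simp_all add: \<sigma>_def)
    ultimately show "ys \<in> (\<lambda>\<sigma>. map \<sigma> [0..<n]) ` {\<sigma>. \<sigma> permutes {..<n}}"
      by blast
  qed
qed

lemma sum_permutes_lessThan_eq_sum_list_permutations:
  "(\<Sum>\<sigma>\<in>{\<sigma>. \<sigma> permutes {..<n}}. g (map \<sigma> [0..<n])) = (\<Sum>ys\<leftarrow>permutations_of_set_list [0..<n]. g ys)"
proof -
  have "permutations_of_set {..<n} = set (permutations_of_set_list [0..<n])"
    using permutations_of_list[of "[0..<n]"] by (simp add: lessThan_atLeast0)
  moreover have "distinct (permutations_of_set_list [0..<n])"
    by (simp add: distinct_permutations_of_set_list)
  ultimately show ?thesis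
    by (simp add: sum.reindex_bij_betw[OF bij_betw_map_upt_permutes] sum_list_distinct_conv_sum_set)
qed

lemma expected_BF_random_order_map:
  fixes h :: "'a::linordered_ab_group_add \<Rightarrow> real"
  assumes "strict_mono h" and "\<And>a b. h (a + b) = h a + h b" and "h C = 1"
  shows "expected_BF_random_order (map h xs) =
    real (\<Sum>ys\<leftarrow>permutations_of_set_list [0..<length xs]. best_fit_bins C (map ((!) xs) ys))
      / fact (length xs)"
proof -
  have "BF (permute_list_by \<sigma> (map h xs)) = best_fit_bins C (map ((!) xs) (map \<sigma> [0..<length xs]))"
    if "\<sigma> permutes {..<length xs}" for \<sigma>
  proof -
    have "permute_list_by \<sigma> (map h xs) = map h (map ((!) xs) (map \<sigma> [0..<length xs]))"
      using permutes_in_image[OF that] by (simp add: permute_list_by_def)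
    then show ?thesis
      by (simp only: BF_map_eq_best_fit_bins[OF assms])
  qed
  then have "(\<Sum>\<sigma>\<in>{\<sigma>. \<sigma> permutes {..<length xs}}. real (BF (permute_list_by \<sigma> (map h xs))))
      = real (\<Sum>\<sigma>\<in>{\<sigma>. \<sigma> permutes {..<length xs}}. best_fit_bins C (map ((!) xs) (map \<sigma> [0..<length xs])))"
    unfolding of_nat_sum by (intro sum.cong) auto
  also have "\<dots> = real (\<Sum>ys\<leftarrow>permutations_of_set_list [0..<length xs]. best_fit_bins C (map ((!) xs) ys))"
    by (simp only: sum_permutes_lessThan_eq_sum_list_permutations[where g = "\<lambda>ys. best_fit_bins C (map ((!) xs) ys)"])
  finally show ?thesis
    by (simp only: expected_BF_random_order_def length_map)
qed

lemma OPT_le_if_pairs_fit: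
  assumes len: "length bs = length as" and fit: "\<And>i. i < length as \<Longrightarrow> as ! i + bs ! i \<le> 1"
  shows "OPT (as @ bs) \<le> length as"
proof -
  let ?k = "length as"
  have "feasible_packing (as @ bs) ?k (\<lambda>i. i mod ?k)"
    unfolding feasible_packing_def
  proof (intro conjI allI impI)
    fix i
    assume "i < length (as @ bs)"
    then show "i mod ?k < ?k"
      using len by (cases "?k = 0") auto
  next
    fix b
    assume b: "b < ?k"
    have bin: "{i. i < length (as @ bs) \<and> i mod ?k = b} = {b, b + ?k}"
    proof (intro equalityI subsetI)
      fix i
      assume "i \<in> {i. i < length (as @ bs) \<and> i mod ?k = b}"
      then show "i \<in> {b, b + ?k}"
        using len by (cases "i < ?k") (auto simp: le_mod_geq)
    qed (use b len in auto)
    show "(\<Sum>i\<in>{i. i < length (as @ bs) \<and> i mod ?k = b}. (as @ bs) ! i) \<le> 1"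
      unfolding bin using b fit[OF b] by (subst sum.insert) (auto simp: nth_append)
  qed
  then show ?thesis
    unfolding OPT_def by (blast intro: Least_le)
qed

theorem proposition3:
  shows "\<exists>xs :: real list.
           (\<forall>x\<in>set xs. 1/3 < x \<and> x \<le> 1) \<and>
           expected_BF_random_order xs > 6/5 * real (OPT xs)"
proof (intro exI conjI)
  let ?h = "\<lambda>k. real_of_int k / 100"
  let ?small = "[34, 35, 36] :: int list" and ?large = "[66, 65, 64] :: int list"
  let ?I = "?small @ ?large"
  show "\<forall>x\<in>set (map ?h ?I). 1/3 < x \<and> x \<le> 1"
    by simp
  have "OPT (map ?h ?small @ map ?h ?large) \<le> length (map ?h ?small)"
    by (rule OPT_le_if_pairs_fit) (auto simp: less_Suc_eq)
  then have "OPT (map ?h ?I) \<le> 3"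
    by simp
  have mono: "strict_mono ?h"
    by (rule strict_monoI) simp
  have add: "?h (a + b) = ?h a + ?h b" for a b
    by (simp add: add_divide_distrib)
  have unit: "?h 100 = 1"
    by simp
  have "(\<Sum>ys\<leftarrow>permutations_of_set_list [0..<length ?I]. best_fit_bins 100 (map ((!) ?I) ys)) = 2600"
    by code_simp
  then have "expected_BF_random_order (map ?h ?I) = 2600 / fact (length ?I)"
    by (simp only: expected_BF_random_order_map[OF mono add unit] of_nat_numeral)
  then have "expected_BF_random_order (map ?h ?I) = 65 / 18"
    by (simp add: fact_numeral)
  with \<open>OPT (map ?h ?I) \<le> 3\<close>
  show "expected_BF_random_order (map ?h ?I) > 6/5 * real (OPT (map ?h ?I))"
    by simp
qed

end
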